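(* Let $\lambda>0$, $\omega_0\ne0$ with $\omega_0^2/(2\lambda)<2$, $e=1-\omega_0^2/(2\lambda)$, and let $\tilde{\mathbf r}_\lambda(t,\omega_0)$ be the trajectory defined in the context. Then for every $t\ge0$, with $\varphi=\varphi(t)$ and $f(\varphi),T(\varphi),b(\varphi)$ the cohesion, kinetic energy and root-mean-square size of the system at time $t$, $$f(\varphi)=\frac{C(\mathbf m)}{b(\varphi)\sqrt{\sum_jm_j}},\qquad T(\varphi)=\frac{C(\mathbf m)}{2b(\varphi)\sqrt{\sum_jm_j}}\cdot\frac{1+e^2-2e\cos\varphi}{1-e\cos\varphi}.$$
   Context: Fix $N\ge2$, masses $\mathbf m=(m_1,\dots,m_N)$, $m_i>0$, $\gamma>0$. Planar configuration space $\mathfrak R=\{\mathbf r=(\mathbf r_1,\dots,\mathbf r_N)\in(\mathbb R^2)^N:\ \mathbf r_i\neq\mathbf r_j \text{ for } i\neq j\}$; cohesion $f(\mathbf r)=\sum_{i<j}\frac{\gamma m_im_j}{|\mathbf r_j-\mathbf r_i|}$; $g(\mathbf r)=\sum_i m_i|\mathbf r_i|^2$; root-mean-square size $b(\mathbf r)=\sqrt{g(\mathbf r)/\sum_jm_j}$; kinetic energy $T=\frac12\sum_j m_j|\dot{\mathbf r}_j|^2$; $C(\mathbf m)=\min\{f(\mathbf r):\mathbf r\in\mathfrak R,\ g(\mathbf r)=1\}$. Let $\mathbf r_\lambda=(\mathbf r_{1\lambda},\dots,\mathbf r_{N\lambda})$ be a global minimizer of $f+\lambda g$ on $\mathfrak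 R$; identify $\mathbb R^2$ with $\mathbb C$, $z_{j\lambda}\leftrightarrow\mathbf r_{j\lambda}$. Put $a(\varphi)=(1-e)/(1-e\cos\varphi)$ and define $\varphi(t)$ by $\omega_0t=\int_0^{\varphi(t)}\frac{(1-e)^2\,d\alpha}{(1-e\cos\alpha)^2}$. The trajectory $\tilde{\mathbf r}_\lambda(t,\omega_0)$ has $j$-th particle at complex position $z_{j\lambda}a(\varphi(t))e^{i\varphi(t)}$; it solves the planar Newtonian $N$-body equations $m_j\ddot{\mathbf r}_j=\sum_{k\ne j}\gamma m_jm_k(\mathbf r_k-\mathbf r_j)/|\mathbf r_k-\mathbf r_j|^3$. *)

theory Defs
  imports "HOL-Analysis.Analysis"
begin

definition config :: "nat \<Rightarrow> (nat \<Rightarrow> complex) \<Rightarrow> bool" where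
  "config N r \<longleftrightarrow> (\<forall>i<N. \<forall>j<N. i \<noteq> j \<longrightarrow> r i \<noteq> r j)"

definition cohesion :: "nat \<Rightarrow> (nat \<Rightarrow> real) \<Rightarrow> real \<Rightarrow> (nat \<Rightarrow> complex) \<Rightarrow> real" where
  "cohesion N m \<gamma> r = (\<Sum>j<N. \<Sum>i<j. \<gamma> * m i * m j / cmod (r j - r i))"

definition moment :: "nat \<Rightarrow> (nat \<Rightarrow> real) \<Rightarrow> (nat \<Rightarrow> complex) \<Rightarrow> real" where
  "moment N m r = (\<Sum>i<N. m i * (cmod (r i))^2)"

definition rms_size :: "nat \<Rightarrow> (nat \<Rightarrow> real) \<Rightarrow> (nat \<Rightarrow> complex) \<Rightarrow> real" where
  "rms_size N m r = sqrt (moment N m r / (\<Sum>j<N. m j))"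

definition Cmin :: "nat \<Rightarrow> (nat \<Rightarrow> real) \<Rightarrow> real \<Rightarrow> real" where
  "Cmin N m \<gamma> = Inf {cohesion N m \<gamma> r | r. config N r \<and> moment N m r = 1}"

definition kinetic :: "nat \<Rightarrow> (nat \<Rightarrow> real) \<Rightarrow> (real \<Rightarrow> nat \<Rightarrow> complex) \<Rightarrow> real \<Rightarrow> real" where
  "kinetic N m q t = (1/2) * (\<Sum>j<N. m j * (cmod (vector_derivative (\<lambda>s. q s j) (at t)))^2)"

definition kepler_Phi :: "real \<Rightarrow> real \<Rightarrow> real" where
  "kepler_Phi e x =
     (if 0 \<le> x then integral {0..x} (\<lambda>\<alpha>. (1 - e)^2 / (1 - e * cos \<alpha>)^2)
      else - integral {x..0} (\<lambda>\<alpha>. (1 - e)^2 / (1 - e * cos \<alpha>)^2))"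

definition kepler_phi :: "real \<Rightarrow> real \<Rightarrow> real \<Rightarrow> real" where
  "kepler_phi e \<omega>0 t = (THE \<phi>. \<omega>0 * t = kepler_Phi e \<phi>)"

definition kepler_a :: "real \<Rightarrow> real \<Rightarrow> real" where
  "kepler_a e \<phi> = (1 - e) / (1 - e * cos \<phi>)"

definition traj :: "real \<Rightarrow> real \<Rightarrow> (nat \<Rightarrow> complex) \<Rightarrow> real \<Rightarrow> nat \<Rightarrow> complex" where
  "traj e \<omega>0 z t j =
     z j * complex_of_real (kepler_a e (kepler_phi e \<omega>0 t)) * exp (\<i> * complex_of_real (kepler_phi e \<omega>0 t))"

end

theory Submission
  imports Defs
begin

text \<open>
  The trajectory is the minimizer \<open>z\<close> multiplied by the complex factor
  \<open>\<rho>(t) = a(\<phi>(t)) exp(i \<phi>(t))\<close>. The cohesion is homogeneous of degree \<open>-1\<close> and \<open>g\<close> of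
  degree 2, so comparing \<open>z\<close> with its dilates gives the virial identity \<open>f(z) = 2\<lambda> g(z)\<close> and
  \<open>C(m) = f(z) sqrt(g(z))\<close>; together with \<open>f(\<rho>z) = f(z)/|\<rho>|\<close> and \<open>b(\<rho>z) = |\<rho>| b(z)\<close> this is
  the first identity. The kinetic energy is \<open>g(z) |\<rho>'|\<^sup>2 / 2\<close>. Inverting \<open>\<Phi>\<close> gives
  \<open>\<phi>' = \<omega>\<^sub>0 / a(\<phi>)\<^sup>2\<close> (Kepler's second law), so \<open>\<rho>'\<close> has radial part \<open>-\<omega>\<^sub>0 e sin \<phi> / (1-e)\<close>
  and transverse part \<open>\<omega>\<^sub>0 (1 - e cos \<phi>) / (1-e)\<close>, whence
  \<open>|\<rho>'|\<^sup>2 = \<omega>\<^sub>0\<^sup>2 (1 + e\<^sup>2 - 2e cos \<phi>) / (1-e)\<^sup>2\<close>. Since \<open>\<omega>\<^sub>0\<^sup>2 = 2\<lambda>(1-e)\<close>, the kinetic energy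
  is \<open>f(\<rho>z) (1 + e\<^sup>2 - 2e cos \<phi>) / (2 (1 - e cos \<phi>))\<close>.
\<close>

section \<open>Scaling of configurations\<close>

lemma config_scale:
  assumes "c \<noteq> 0" "config N z"
  shows "config N (\<lambda>j. c * z j)"
  using assms by (simp add: config_def)

lemma cohesion_scale:
  assumes "c \<noteq> 0"
  shows "cohesion N m \<gamma> (\<lambda>j. c * z j) = cohesion N m \<gamma> z / cmod c"
proof -
  have "c * z j - c * z i = c * (z j - z i)" for i j
    by (simp add: algebra_simps)
  then show ?thesis
    by (simp add: cohesion_def norm_mult sum_divide_distrib mult.commute)
qed

lemma moment_scale: "moment N m (\<lambda>j. c * z j) = (cmod c)^2 * moment N m z"
  by (simp add: moment_def norm_mult sum_distrib_left power_mult_distrib algebra_simps)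

lemma rms_size_scale: "rms_size N m (\<lambda>j. c * z j) = cmod c * rms_size N m z"
proof -
  have "rms_size N m (\<lambda>j. c * z j) = sqrt ((cmod c)^2) * sqrt (moment N m z / (\<Sum>j<N. m j))"
    by (simp only: rms_size_def moment_scale times_divide_eq_right[symmetric] real_sqrt_mult)
  then show ?thesis
    by (simp add: rms_size_def)
qed

lemma rms_size_mult_sqrt_mass:
  assumes "0 < (\<Sum>j<N. m j)"
  shows "rms_size N m z * sqrt (\<Sum>j<N. m j) = sqrt (moment N m z)"
  using assms by (simp add: rms_size_def real_sqrt_mult[symmetric])

lemma moment_pos:
  assumes "N \<ge> 2" "\<forall>i<N. m i > 0" "config N z"
  shows "0 < moment N m z"
proof -
  obtain k where k: "k < N" "z k \<noteq> 0"
    using assms(1,3) unfolding config_def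
    by (metis One_nat_def less_2_cases_iff less_le_trans zero_neq_one)
  have "0 < m k * (cmod (z k))^2"
    using k assms(2) by simp
  also have "\<dots> \<le> moment N m z"
    unfolding moment_def using k assms(2)
    by (intro member_le_sum[where f = "\<lambda>i. m i * (cmod (z i))^2"]) (auto intro: less_imp_le)
  finally show ?thesis .
qed

lemma kinetic_scale:
  assumes "\<rho> differentiable (at t)"
  shows "kinetic N m (\<lambda>s j. \<rho> s * z j) t = moment N m z * (cmod (vector_derivative \<rho> (at t)))^2 / 2"
proof -
  have "vector_derivative (\<lambda>s. \<rho> s * z j) (at t) = vector_derivative \<rho> (at t) * z j" for j
    using assms
    by (intro vector_derivative_at has_vector_derivative_mult_left vector_derivative_works[THEN iffD1])
  then show ?thesis
    by (simp add: kinetic_def moment_def norm_mult power_mult_distrib sum_distrib_left mult_ac)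
qed

section \<open>Minimizers of \<open>f + \<lambda>g\<close>\<close>

definition energy_minimizer :: "nat \<Rightarrow> (nat \<Rightarrow> real) \<Rightarrow> real \<Rightarrow> real \<Rightarrow> (nat \<Rightarrow> complex) \<Rightarrow> bool" where
  "energy_minimizer N m \<gamma> lam z \<longleftrightarrow> config N z \<and>
     (\<forall>w. config N w \<longrightarrow>
        cohesion N m \<gamma> z + lam * moment N m z \<le> cohesion N m \<gamma> w + lam * moment N m w)"

lemma minimizer_virial:
  assumes "energy_minimizer N m \<gamma> lam z"
  shows "cohesion N m \<gamma> z = 2 * lam * moment N m z"
proof -
  define h where "h s = cohesion N m \<gamma> z / s + lam * s^2 * moment N m z" for s :: real
  have deriv: "(h has_real_derivative - cohesion N m \<gamma> z + 2 * lam * moment N m z) (at 1)"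
    unfolding h_def by (auto intro!: derivative_eq_intros)
  have "h 1 \<le> h s" if "\<bar>1 - s\<bar> < 1" for s
  proof -
    have "0 < s"
      using that by linarith
    then have "complex_of_real s \<noteq> 0"
      by simp
    then have "h 1 \<le> cohesion N m \<gamma> (\<lambda>j. complex_of_real s * z j)
                        + lam * moment N m (\<lambda>j. complex_of_real s * z j)"
      using assms config_scale by (simp add: energy_minimizer_def h_def)
    also have "\<dots> = h s"
      using \<open>0 < s\<close> by (simp add: h_def cohesion_scale moment_scale)
    finally show ?thesis .
  qed
  then show ?thesis
    using DERIV_local_min[OF deriv zero_less_one] by simp
qed

lemma Cmin_eq_of_minimizer:
  assumes "energy_minimizer N m \<gamma> lam z" "0 < moment N m z"
  shows "Cmin N m \<gamma> = cohesion N m \<gamma> z * sqrt (moment N m z)"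
  unfolding Cmin_def
proof (rule cInf_eq_minimum)
  define c where "c = complex_of_real (inverse (sqrt (moment N m z)))"
  have "c \<noteq> 0" "cmod c = inverse (sqrt (moment N m z))"
    using assms(2) by (auto simp: c_def norm_inverse)
  then have "config N (\<lambda>j. c * z j)" "moment N m (\<lambda>j. c * z j) = 1"
      "cohesion N m \<gamma> (\<lambda>j. c * z j) = cohesion N m \<gamma> z * sqrt (moment N m z)"
    using assms config_scale
    by (simp_all add: energy_minimizer_def moment_scale cohesion_scale power_inverse divide_inverse)
  then show "cohesion N m \<gamma> z * sqrt (moment N m z) \<in> {cohesion N m \<gamma> r |r. config N r \<and> moment N m r = 1}"
    unfolding mem_Collect_eq by (intro exI[of _ "\<lambda>j. c * z j"]) simp
next
  fix x
  assume "x \<in> {cohesion N m \<gamma> r |r. config N r \<and> moment N m r = 1}"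
  then obtain r where r: "x = cohesion N m \<gamma> r" "config N r" "moment N m r = 1"
    by blast
  define c where "c = complex_of_real (sqrt (moment N m z))"
  have "c \<noteq> 0" "cmod c = sqrt (moment N m z)"
    using assms(2) by (auto simp: c_def)
  then have "cohesion N m \<gamma> z + lam * moment N m z
               \<le> cohesion N m \<gamma> (\<lambda>j. c * r j) + lam * moment N m (\<lambda>j. c * r j)"
    using assms(1) config_scale r(2) by (simp add: energy_minimizer_def)
  also have "\<dots> = x / sqrt (moment N m z) + lam * moment N m z"
    using \<open>c \<noteq> 0\<close> \<open>cmod c = _\<close> assms(2) r by (simp add: cohesion_scale moment_scale)
  finally show "cohesion N m \<gamma> z * sqrt (moment N m z) \<le> x"
    using assms(2) by (simp add: field_simps)
qed

lemma cohesion_scale_minimizer: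
  assumes "N \<ge> 2" "\<forall>i<N. m i > 0" "energy_minimizer N m \<gamma> lam z" "c \<noteq> 0"
  shows "cohesion N m \<gamma> (\<lambda>j. c * z j)
           = Cmin N m \<gamma> / (rms_size N m (\<lambda>j. c * z j) * sqrt (\<Sum>j<N. m j))"
proof -
  have "0 < moment N m z"
    using assms(1-3) by (intro moment_pos) (auto simp: energy_minimizer_def)
  have "0 < (\<Sum>j<N. m j)"
    using assms(1,2) by (intro sum_pos) (auto simp: lessThan_empty_iff)
  then have "rms_size N m (\<lambda>j. c * z j) * sqrt (\<Sum>j<N. m j) = cmod c * sqrt (moment N m z)"
    by (simp add: rms_size_scale rms_size_mult_sqrt_mass mult.assoc)
  then show ?thesis
    using \<open>0 < moment N m z\<close> assms(4)
    by (simp add: Cmin_eq_of_minimizer[OF assms(3)] cohesion_scale)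
qed

section \<open>The Kepler time function\<close>

lemma one_minus_mult_cos_pos:
  fixes e x :: real
  assumes "\<bar>e\<bar> < 1"
  shows "0 < 1 - e * cos x"
proof -
  have "\<bar>e * cos x\<bar> \<le> \<bar>e\<bar>"
    using abs_cos_le_one[of x] by (simp add: abs_mult mult_left_le)
  then show ?thesis
    using assms by linarith
qed

lemma kepler_a_pos:
  assumes "\<bar>e\<bar> < 1"
  shows "0 < kepler_a e x"
  using one_minus_mult_cos_pos[OF assms, of x] assms by (simp add: kepler_a_def)

lemma kepler_a_ge:
  assumes "\<bar>e\<bar> < 1"
  shows "(1 - e) / 2 \<le> kepler_a e x"
proof -
  have "\<bar>e * cos x\<bar> \<le> 1"
    using abs_cos_le_one[of x] assms by (simp add: abs_mult mult_le_one)
  then have "1 - e * cos x \<le> 2"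
    by linarith
  then show ?thesis
    unfolding kepler_a_def using assms one_minus_mult_cos_pos[OF assms, of x]
    by (intro divide_left_mono) auto
qed

lemma continuous_on_kepler_a:
  assumes "\<bar>e\<bar> < 1"
  shows "continuous_on S (kepler_a e)"
  unfolding kepler_a_def using one_minus_mult_cos_pos[OF assms]
  by (intro continuous_intros) (auto simp: less_imp_neq[symmetric])

lemma has_real_derivative_kepler_a:
  assumes "\<bar>e\<bar> < 1"
  shows "(kepler_a e has_real_derivative - e * sin x * (kepler_a e x)^2 / (1 - e)) (at x)"
proof -
  define d where "d = 1 - e * cos x"
  have "d \<noteq> 0" "1 - e \<noteq> 0"
    using one_minus_mult_cos_pos[OF assms, of x] assms by (auto simp: d_def)
  then have "- ((1 - e) * (e * sin x)) / d^2 = - e * sin x * ((1 - e) / d)^2 / (1 - e)"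
    by (simp add: field_simps power2_eq_square)
  moreover have "(kepler_a e has_real_derivative - ((1 - e) * (e * sin x)) / d^2) (at x)"
    unfolding kepler_a_def using \<open>d \<noteq> 0\<close>
    by (auto intro!: derivative_eq_intros simp: d_def power2_eq_square)
  ultimately show ?thesis
    by (simp add: kepler_a_def d_def)
qed

lemma kepler_Phi_integrand_eq: "(\<lambda>\<alpha>. (1 - e)^2 / (1 - e * cos \<alpha>)^2) = (\<lambda>\<alpha>. (kepler_a e \<alpha>)^2)"
  by (simp add: kepler_a_def power_divide)

lemma kepler_Phi_eq_integral_diff:
  assumes "\<bar>e\<bar> < 1" "c \<le> 0" "c \<le> x"
  shows "kepler_Phi e x
           = integral {c..x} (\<lambda>\<alpha>. (kepler_a e \<alpha>)^2) - integral {c..0} (\<lambda>\<alpha>. (kepler_a e \<alpha>)^2)"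
proof -
  have integrable: "(\<lambda>\<alpha>. (kepler_a e \<alpha>)^2) integrable_on {a..b}" for a b
    by (intro integrable_continuous_interval continuous_on_power continuous_on_kepler_a assms(1))
  show ?thesis
  proof (cases "0 \<le> x")
    case True
    then show ?thesis
      using Henstock_Kurzweil_Integration.integral_combine[OF assms(2) True integrable]
      by (simp add: kepler_Phi_def kepler_Phi_integrand_eq)
  next
    case False
    then show ?thesis
      using Henstock_Kurzweil_Integration.integral_combine[OF assms(3) _ integrable[of c 0]]
      by (simp add: kepler_Phi_def kepler_Phi_integrand_eq)
  qed
qed

lemma has_real_derivative_kepler_Phi:
  assumes "\<bar>e\<bar> < 1"
  shows "(kepler_Phi e has_real_derivative (kepler_a e x)^2) (at x)"
proof -
  define c where "c = min (x - 1) (-1)"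
  define F where "F y = integral {c..y} (\<lambda>\<alpha>. (kepler_a e \<alpha>)^2)" for y
  have "(F has_real_derivative (kepler_a e x)^2) (at x within {c..x + 1})"
    unfolding F_def
    by (intro integral_has_real_derivative continuous_on_power continuous_on_kepler_a assms)
       (auto simp: c_def)
  then have "(F has_real_derivative (kepler_a e x)^2) (at x)"
    using at_within_interior[of x "{c..x + 1}"] by (simp add: c_def)
  then have deriv: "((\<lambda>y. F y - F 0) has_real_derivative (kepler_a e x)^2) (at x)"
    using DERIV_diff[OF _ DERIV_const[of "F 0"]] by simp
  have eq: "F y - F 0 = kepler_Phi e y" if "y \<in> {c<..}" for y
    using kepler_Phi_eq_integral_diff[OF assms, of c y] that by (simp add: F_def c_def)
  show ?thesis
    by (rule has_field_derivative_transform_within_open[where S = "{c<..}",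
          OF deriv open_greaterThan _ eq])
       (simp add: c_def)
qed

lemma strict_mono_kepler_Phi:
  assumes "\<bar>e\<bar> < 1"
  shows "strict_mono (kepler_Phi e)"
proof (rule strict_monoI)
  fix x y :: real
  assume "x < y"
  have "(kepler_Phi e has_real_derivative (kepler_a e s)^2) (at s) \<and> 0 < (kepler_a e s)^2" for s
    using has_real_derivative_kepler_Phi[OF assms] kepler_a_pos[OF assms, of s] by simp
  then show "kepler_Phi e x < kepler_Phi e y"
    by (intro DERIV_pos_imp_increasing[OF \<open>x < y\<close>]) blast
qed

lemma kepler_Phi_mean_value:
  assumes "\<bar>e\<bar> < 1"
  obtains \<xi> where "kepler_Phi e x = x * (kepler_a e \<xi>)^2"
proof -
  have Phi_0: "kepler_Phi e 0 = 0"
    by (simp add: kepler_Phi_def)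
  note MVT = MVT2[of _ _ "kepler_Phi e" "\<lambda>\<xi>. (kepler_a e \<xi>)^2",
                   OF _ has_real_derivative_kepler_Phi[OF assms]]
  consider "x < 0" | "x = 0" | "0 < x"
    by linarith
  then show ?thesis
  proof cases
    case 1
    then obtain \<xi> where "kepler_Phi e 0 - kepler_Phi e x = (0 - x) * (kepler_a e \<xi>)^2"
      using MVT by blast
    then show ?thesis
      by (intro that[of \<xi>]) (simp add: Phi_0)
  next
    case 2
    then show ?thesis
      by (intro that[of 0]) (simp add: Phi_0)
  next
    case 3
    then obtain \<xi> where "kepler_Phi e x - kepler_Phi e 0 = (x - 0) * (kepler_a e \<xi>)^2"
      using MVT by blast
    then show ?thesis
      by (intro that[of \<xi>]) (simp add: Phi_0)
  qed
qed

lemma surj_kepler_Phi: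
  assumes "\<bar>e\<bar> < 1"
  shows "surj (kepler_Phi e)"
proof (rule surjI[of _ "\<lambda>v. SOME x. kepler_Phi e x = v"], rule someI_ex)
  fix v
  define k where "k = ((1 - e) / 2)^2"
  have "0 < k"
    using assms by (simp add: k_def)
  have k_le: "k \<le> (kepler_a e \<xi>)^2" for \<xi>
    unfolding k_def using kepler_a_ge[OF assms, of \<xi>] assms by (intro power_mono) auto
  define B where "B = \<bar>v\<bar> / k + 1"
  have "0 < B" "\<bar>v\<bar> \<le> k * B"
    using \<open>0 < k\<close> by (auto simp: B_def field_simps)
  obtain \<xi> where \<xi>: "kepler_Phi e B = B * (kepler_a e \<xi>)^2"
    using kepler_Phi_mean_value[OF assms] .
  obtain \<eta> where \<eta>: "kepler_Phi e (-B) = -B * (kepler_a e \<eta>)^2"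
    using kepler_Phi_mean_value[OF assms] .
  have "k * B \<le> B * (kepler_a e \<xi>)^2" "k * B \<le> B * (kepler_a e \<eta>)^2"
    using k_le \<open>0 < B\<close> by (simp_all add: mult.commute mult_left_mono)
  then have "kepler_Phi e (-B) \<le> v" "v \<le> kepler_Phi e B"
    using \<xi> \<eta> \<open>\<bar>v\<bar> \<le> k * B\<close> by auto
  then show "\<exists>x. kepler_Phi e x = v"
    using IVT[of "kepler_Phi e" "-B" v B] \<open>0 < B\<close>
      has_real_derivative_kepler_Phi[OF assms, THEN DERIV_isCont] by auto
qed

lemma bij_kepler_Phi:
  assumes "\<bar>e\<bar> < 1"
  shows "bij (kepler_Phi e)"
  using strict_mono_kepler_Phi[OF assms, THEN strict_mono_imp_inj_on] surj_kepler_Phi[OF assms]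
  by (simp add: bij_def)

lemma kepler_phi_eq_inv:
  assumes "\<bar>e\<bar> < 1"
  shows "kepler_phi e \<omega> t = inv (kepler_Phi e) (\<omega> * t)"
  unfolding kepler_phi_def
proof (rule the_equality)
  have "bij (kepler_Phi e)"
    by (rule bij_kepler_Phi[OF assms])
  then show "\<omega> * t = kepler_Phi e (inv (kepler_Phi e) (\<omega> * t))"
    by (simp add: surj_f_inv_f bij_is_surj)
  fix \<phi>
  assume "\<omega> * t = kepler_Phi e \<phi>"
  with \<open>bij (kepler_Phi e)\<close> show "\<phi> = inv (kepler_Phi e) (\<omega> * t)"
    by (simp add: inv_f_f bij_is_inj)
qed

lemma has_real_derivative_inv_kepler_Phi:
  assumes "\<bar>e\<bar> < 1"
  shows "(inv (kepler_Phi e) has_real_derivative 1 / (kepler_a e (inv (kepler_Phi e) v))^2) (at v)"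
proof -
  let ?g = "inv (kepler_Phi e)"
  have bij: "bij (kepler_Phi e)"
    by (rule bij_kepler_Phi[OF assms])
  have Phi_g: "kepler_Phi e (?g y) = y" for y
    using bij by (simp add: surj_f_inv_f bij_is_surj)
  have g_Phi: "?g (kepler_Phi e x) = x" for x
    using bij by (simp add: inv_f_f bij_is_inj)
  have "isCont ?g (kepler_Phi e (?g v))"
    by (rule isCont_inverse_function[where f = "kepler_Phi e" and d = 1])
       (simp_all add: g_Phi has_real_derivative_kepler_Phi[OF assms, THEN DERIV_isCont])
  then have cont: "isCont ?g v"
    by (simp only: Phi_g)
  have nonzero: "(kepler_a e (?g v))^2 \<noteq> 0"
    using kepler_a_pos[OF assms, of "?g v"] by simp
  have "(?g has_real_derivative inverse ((kepler_a e (?g v))^2)) (at v)"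
    by (rule DERIV_inverse_function[where a = "v - 1" and b = "v + 1",
          OF has_real_derivative_kepler_Phi[OF assms] nonzero _ _ Phi_g cont]) simp_all
  then show ?thesis
    by (simp add: inverse_eq_divide)
qed

lemma has_real_derivative_kepler_phi:
  assumes "\<bar>e\<bar> < 1"
  shows "(kepler_phi e \<omega> has_real_derivative \<omega> / (kepler_a e (kepler_phi e \<omega> t))^2) (at t)"
proof -
  have "((\<lambda>s. inv (kepler_Phi e) (\<omega> * s)) has_real_derivative
          1 / (kepler_a e (inv (kepler_Phi e) (\<omega> * t)))^2 * \<omega>) (at t)"
    by (rule DERIV_chain2[OF has_real_derivative_inv_kepler_Phi[OF assms]])
       (auto intro!: derivative_eq_intros)
  then show ?thesis
    by (simp add: kepler_phi_eq_inv[OF assms, abs_def])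
qed

section \<open>The Kepler orbit\<close>

lemma has_vector_derivative_polar:
  assumes "(r has_real_derivative r') (at t)" "(\<theta> has_real_derivative \<theta>') (at t)"
  shows "((\<lambda>s. complex_of_real (r s) * exp (\<i> * complex_of_real (\<theta> s))) has_vector_derivative
           (complex_of_real r' + \<i> * complex_of_real (r t * \<theta>')) * exp (\<i> * complex_of_real (\<theta> t)))
         (at t)"
proof -
  have "((\<lambda>s. cis (\<theta> s)) has_vector_derivative \<theta>' *\<^sub>R (\<i> * cis (\<theta> t))) (at t)"
    using assms(2) unfolding has_vector_derivative_def has_field_derivative_def
    by (auto intro!: derivative_eq_intros)
  from has_vector_derivative_mult[OF has_vector_derivative_of_real[OF assms(1)] this]
  show ?thesis
    by (simp add: cis_conv_exp scaleR_conv_of_real algebra_simps)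
qed

definition kepler_orbit :: "real \<Rightarrow> real \<Rightarrow> real \<Rightarrow> complex" where
  "kepler_orbit e \<omega> t =
     complex_of_real (kepler_a e (kepler_phi e \<omega> t)) * exp (\<i> * complex_of_real (kepler_phi e \<omega> t))"

lemma traj_eq_kepler_orbit: "traj e \<omega> z t = (\<lambda>j. kepler_orbit e \<omega> t * z j)"
  by (simp add: traj_def kepler_orbit_def fun_eq_iff mult_ac)

lemma norm_kepler_orbit:
  assumes "\<bar>e\<bar> < 1"
  shows "cmod (kepler_orbit e \<omega> t) = kepler_a e (kepler_phi e \<omega> t)"
  using kepler_a_pos[OF assms, of "kepler_phi e \<omega> t"] by (simp add: kepler_orbit_def norm_mult)

lemma kepler_orbit_nonzero:
  assumes "\<bar>e\<bar> < 1"
  shows "kepler_orbit e \<omega> t \<noteq> 0"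
  using norm_kepler_orbit[OF assms] kepler_a_pos[OF assms] by (metis norm_zero less_irrefl)

lemma has_vector_derivative_kepler_orbit:
  fixes e \<omega> t :: real
  assumes "\<bar>e\<bar> < 1"
  defines "\<phi> \<equiv> kepler_phi e \<omega> t"
  shows "(kepler_orbit e \<omega> has_vector_derivative
           (complex_of_real (- \<omega> * e * sin \<phi> / (1 - e))
             + \<i> * complex_of_real (\<omega> * (1 - e * cos \<phi>) / (1 - e))) * exp (\<i> * complex_of_real \<phi>))
         (at t)"
proof -
  define k where "k = 1 - e"
  define d where "d = 1 - e * cos \<phi>"
  have "k \<noteq> 0" "d \<noteq> 0"
    using one_minus_mult_cos_pos[OF assms(1), of \<phi>] assms(1) by (auto simp: k_def d_def)
  have a_eq: "kepler_a e \<phi> = k / d"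
    by (simp add: k_def d_def kepler_a_def)
  have radial: "- e * sin \<phi> * (kepler_a e \<phi>)^2 / (1 - e) * (\<omega> / (kepler_a e \<phi>)^2)
                       = - \<omega> * e * sin \<phi> / (1 - e)"
    and angular: "kepler_a e \<phi> * (\<omega> / (kepler_a e \<phi>)^2) = \<omega> * (1 - e * cos \<phi>) / (1 - e)"
    unfolding a_eq k_def[symmetric] d_def[symmetric] using \<open>k \<noteq> 0\<close> \<open>d \<noteq> 0\<close>
    by (simp_all add: field_simps power2_eq_square)
  have "((\<lambda>s. kepler_a e (kepler_phi e \<omega> s)) has_real_derivative
          - e * sin \<phi> * (kepler_a e \<phi>)^2 / (1 - e) * (\<omega> / (kepler_a e \<phi>)^2)) (at t)"
    unfolding \<phi>_def
    by (rule DERIV_chain2[OF has_real_derivative_kepler_a has_real_derivative_kepler_phi])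
       (use assms(1) in simp_all)
  then have "((\<lambda>s. kepler_a e (kepler_phi e \<omega> s)) has_real_derivative
               - \<omega> * e * sin \<phi> / (1 - e)) (at t)"
    by (simp only: radial)
  moreover have "(kepler_phi e \<omega> has_real_derivative \<omega> / (kepler_a e \<phi>)^2) (at t)"
    unfolding \<phi>_def by (rule has_real_derivative_kepler_phi[OF assms(1)])
  ultimately have "(kepler_orbit e \<omega> has_vector_derivative
      (complex_of_real (- \<omega> * e * sin \<phi> / (1 - e))
        + \<i> * complex_of_real (kepler_a e \<phi> * (\<omega> / (kepler_a e \<phi>)^2))) * exp (\<i> * complex_of_real \<phi>))
      (at t)"
    unfolding kepler_orbit_def[abs_def] \<phi>_def by (rule has_vector_derivative_polar)
  then show ?thesis
    by (simp only: angular)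
qed

lemma norm_vector_derivative_kepler_orbit:
  fixes e \<omega> t :: real
  assumes "\<bar>e\<bar> < 1"
  defines "\<phi> \<equiv> kepler_phi e \<omega> t"
  shows "(cmod (vector_derivative (kepler_orbit e \<omega>) (at t)))^2
           = (\<omega> / (1 - e))^2 * (1 + e^2 - 2 * e * cos \<phi>)"
proof -
  have "(cmod (vector_derivative (kepler_orbit e \<omega>) (at t)))^2
          = (- \<omega> * e * sin \<phi> / (1 - e))^2 + (\<omega> * (1 - e * cos \<phi>) / (1 - e))^2"
    unfolding vector_derivative_at[OF has_vector_derivative_kepler_orbit[OF assms(1)]]
    by (simp add: \<phi>_def[symmetric] norm_mult cmod_power2)
  also have "\<dots> = (\<omega> / (1 - e))^2 * ((e * sin \<phi>)^2 + (1 - e * cos \<phi>)^2)"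
    by (simp add: power_divide power_mult_distrib add_divide_distrib distrib_left)
  also have "(e * sin \<phi>)^2 + (1 - e * cos \<phi>)^2 = 1 + e^2 - 2 * e * cos \<phi>"
    using sin_cos_squared_add[of \<phi>] by algebra
  finally show ?thesis .
qed

lemma kinetic_traj_eq_cohesion:
  fixes e \<omega> lam t :: real
  assumes e: "\<bar>e\<bar> < 1" and \<omega>_sq: "\<omega>^2 = 2 * lam * (1 - e)" and "energy_minimizer N m \<gamma> lam z"
  defines "\<phi> \<equiv> kepler_phi e \<omega> t"
  shows "kinetic N m (traj e \<omega> z) t
           = cohesion N m \<gamma> (traj e \<omega> z t) / 2 * ((1 + e^2 - 2 * e * cos \<phi>) / (1 - e * cos \<phi>))"
proof -
  define k where "k = 1 - e"
  define d where "d = 1 - e * cos \<phi>"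
  define X where "X = 1 + e^2 - 2 * e * cos \<phi>"
  define g where "g = moment N m z"
  have "k \<noteq> 0" "d \<noteq> 0"
    using e one_minus_mult_cos_pos[OF e, of \<phi>] by (auto simp: k_def d_def)
  have "kinetic N m (traj e \<omega> z) t = g * ((\<omega> / k)^2 * X) / 2"
    using has_vector_derivative_kepler_orbit[OF e, THEN differentiableI_vector]
    by (simp add: traj_eq_kepler_orbit[abs_def] kinetic_scale norm_vector_derivative_kepler_orbit[OF e]
        g_def k_def X_def \<phi>_def)
  also have "\<dots> = g * (2 * lam * k / k^2 * X) / 2"
    using \<omega>_sq by (simp add: power_divide k_def)
  also have "\<dots> = 2 * lam * g * d / k / 2 * (X / d)"
    using \<open>k \<noteq> 0\<close> \<open>d \<noteq> 0\<close> by (simp add: field_simps power2_eq_square)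
  also have "2 * lam * g * d / k = cohesion N m \<gamma> (traj e \<omega> z t)"
    using kepler_orbit_nonzero[OF e] minimizer_virial[OF assms(3)]
    by (simp add: traj_eq_kepler_orbit cohesion_scale norm_kepler_orbit[OF e] kepler_a_def
        g_def k_def d_def \<phi>_def)
  finally show ?thesis
    by (simp add: X_def d_def)
qed

theorem theorem8p3:
  fixes N :: nat and m :: "nat \<Rightarrow> real" and \<gamma> lam \<omega>0 e t :: real
    and z :: "nat \<Rightarrow> complex"
  assumes N: "N \<ge> 2"
    and m_pos: "\<forall>i<N. m i > 0"
    and \<gamma>_pos: "\<gamma> > 0"
    and lam_pos: "lam > 0"
    and \<omega>0_nz: "\<omega>0 \<noteq> 0"
    and \<omega>0_small: "\<omega>0^2 / (2 * lam) < 2"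
    and e_def: "e = 1 - \<omega>0^2 / (2 * lam)"
    and z_config: "config N z"
    and z_min: "\<forall>w. config N w \<longrightarrow>
                   cohesion N m \<gamma> z + lam * moment N m z \<le> cohesion N m \<gamma> w + lam * moment N m w"
    and t_nonneg: "t \<ge> 0"
  shows "(cohesion N m \<gamma> (traj e \<omega>0 z t)
           = Cmin N m \<gamma> / (rms_size N m (traj e \<omega>0 z t) * sqrt (\<Sum>j<N. m j)))
         \<and> (kinetic N m (traj e \<omega>0 z) t
           = Cmin N m \<gamma> / (2 * rms_size N m (traj e \<omega>0 z t) * sqrt (\<Sum>j<N. m j))
             * ((1 + e^2 - 2 * e * cos (kepler_phi e \<omega>0 t)) / (1 - e * cos (kepler_phi e \<omega>0 t))))"
proof -
  have "0 < \<omega>0^2 / (2 * lam)"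
    using \<omega>0_nz lam_pos by simp
  then have e: "\<bar>e\<bar> < 1" and \<omega>0_sq: "\<omega>0^2 = 2 * lam * (1 - e)"
    using e_def \<omega>0_small lam_pos by auto
  have min: "energy_minimizer N m \<gamma> lam z"
    using z_config z_min by (simp add: energy_minimizer_def)
  have cohesion: "cohesion N m \<gamma> (traj e \<omega>0 z t)
                    = Cmin N m \<gamma> / (rms_size N m (traj e \<omega>0 z t) * sqrt (\<Sum>j<N. m j))"
    unfolding traj_eq_kepler_orbit
    by (rule cohesion_scale_minimizer[OF N m_pos min kepler_orbit_nonzero[OF e]])
  moreover have "kinetic N m (traj e \<omega>0 z) t
                   = cohesion N m \<gamma> (traj e \<omega>0 z t) / 2
                     * ((1 + e^2 - 2 * e * cos (kepler_phi e \<omega>0 t)) / (1 - e * cos (kepler_phi e \<omega>0 t)))"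
    by (rule kinetic_traj_eq_cohesion[OF e \<omega>0_sq min])
  ultimately show ?thesis
    by (simp add: mult_ac)
qed

end
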